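(* Let $R$ be a commutative ring with identity. Then $R$ satisfies Property $D$ if and only if the polynomial ring $R[x]$ satisfies Property $D$.
   Context: A ring $A$ satisfies Property $D$ if $A\setminus\mathfrak{N}(A)=\mathrm{reg}(A)$, where $\mathfrak{N}(A)$ is the nilradical and $\mathrm{reg}(A)$ the set of regular elements (non-zero-divisors). *)

theory Defs
  imports "HOL-Computational_Algebra.Polynomial"
begin

definition nilradical :: "'a::comm_ring_1 set" where
  "nilradical = {a. \<exists>n::nat. a ^ n = 0}"

definition regular_elements :: "'a::comm_ring_1 set" where
  "regular_elements = {a. \<forall>b. a * b = 0 \<longrightarrow> b = 0}"

definition property_D :: "'a::comm_ring_1 itself \<Rightarrow> bool" where
  "property_D TYPE('a) \<longleftrightarrow> (UNIV :: 'a set) - nilradical = regular_elements"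

end

theory Submission
  imports Defs
begin

text \<open>
  Property D amounts to nontriviality plus: every non-nilpotent element is regular.
  A constant polynomial is nilpotent, resp. regular, exactly when its value is, which
  gives the passage from \<open>R[x]\<close> down to \<open>R\<close>.  Conversely, write a non-nilpotent
  \<open>f = a + x p\<close>.  If \<open>a\<close> is not nilpotent it is regular, and a polynomial with
  regular constant term is regular.  If \<open>a\<close> is nilpotent, then \<open>p\<close> cannot be
  nilpotent (nilpotents form an ideal), so by induction \<open>p\<close>, hence \<open>x p\<close>, is
  regular, and a regular element plus a nilpotent one is regular.
\<close>

lemma nilradicalI: "a ^ n = 0 \<Longrightarrow> a \<in> nilradical"
  unfolding nilradical_def by blast

lemma nilradicalE:
  assumes "a \<in> nilradical"
  obtains n where "a ^ n = 0"
  using assms unfolding nilradical_def by blast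

lemma regular_elementsI: "(\<And>b. a * b = 0 \<Longrightarrow> b = 0) \<Longrightarrow> a \<in> regular_elements"
  unfolding regular_elements_def by blast

lemma regular_elementsD: "a \<in> regular_elements \<Longrightarrow> a * b = 0 \<Longrightarrow> b = 0"
  unfolding regular_elements_def by blast

lemma zero_in_nilradical: "0 \<in> nilradical"
  using nilradicalI[of 0 1] by simp

lemma nilradical_add:
  fixes a b :: "'a::comm_ring_1"
  assumes "a \<in> nilradical" "b \<in> nilradical"
  shows "a + b \<in> nilradical"
proof -
  obtain m l where a: "a ^ m = 0" and b: "b ^ l = 0"
    using assms by (blast elim: nilradicalE)
  have "a ^ k * b ^ (m + l - k) = 0" for k
  proof (cases "m \<le> k")
    case True
    then have "a ^ k = a ^ m * a ^ (k - m)" by (simp flip: power_add)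
    then show ?thesis using a by simp
  next
    case False
    then have "m + l - k = l + (m - k)" by simp
    then have "b ^ (m + l - k) = b ^ l * b ^ (m - k)" by (simp add: power_add)
    then show ?thesis using b by simp
  qed
  then have "(a + b) ^ (m + l) = 0"
    unfolding binomial_ring by (simp add: mult.assoc)
  then show ?thesis by (rule nilradicalI)
qed

lemma nilradical_mult:
  fixes a b :: "'a::comm_ring_1"
  assumes "a \<in> nilradical"
  shows "a * b \<in> nilradical"
proof -
  obtain n where "a ^ n = 0" using assms by (rule nilradicalE)
  then have "(a * b) ^ n = 0" by (simp add: power_mult_distrib)
  then show ?thesis by (rule nilradicalI)
qed

lemma regular_elements_mult:
  fixes a b :: "'a::comm_ring_1"
  assumes "a \<in> regular_elements" "b \<in> regular_elements"
  shows "a * b \<in> regular_elements"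
proof (rule regular_elementsI)
  fix c
  assume "a * b * c = 0"
  with assms(1) have "b * c = 0" by (simp add: mult.assoc regular_elementsD)
  with assms(2) show "c = 0" by (rule regular_elementsD)
qed

lemma regular_elements_power:
  fixes a :: "'a::comm_ring_1"
  assumes "a \<in> regular_elements"
  shows "a ^ k \<in> regular_elements"
proof (induction k)
  case 0
  show ?case by (rule regular_elementsI) simp
next
  case (Suc k)
  then show ?case using regular_elements_mult[OF assms] by simp
qed

lemma nilradical_Int_regular_elements:
  assumes "(0::'a::comm_ring_1) \<noteq> 1"
  shows "nilradical \<inter> regular_elements = ({} :: 'a set)"
proof (intro equals0I)
  fix a :: 'a
  assume "a \<in> nilradical \<inter> regular_elements"
  then obtain n where "a ^ n = 0" "a ^ n \<in> regular_elements"
    using regular_elements_power by (blast elim: nilradicalE)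
  then have "(1::'a) = 0" using regular_elementsD[of "a ^ n" 1] by simp
  with assms show False by simp
qed

lemma regular_elements_add_nilradical:
  fixes r n :: "'a::comm_ring_1"
  assumes r: "r \<in> regular_elements" and n: "n \<in> nilradical"
  shows "r + n \<in> regular_elements"
proof (rule regular_elementsI)
  fix b
  assume "(r + n) * b = 0"
  then have rb: "r * b = - n * b" by (simp add: algebra_simps add_eq_0_iff)
  have power_rb: "r ^ k * b = (- n) ^ k * b" for k
  proof (induction k)
    case (Suc k)
    have "r ^ Suc k * b = r ^ k * (r * b)" by (simp add: algebra_simps)
    also have "\<dots> = - n * (r ^ k * b)" using rb by (simp add: algebra_simps)
    also have "\<dots> = (- n) ^ Suc k * b" using Suc by simp
    finally show ?case .
  qed simp
  obtain m where "n ^ m = 0" using n by (rule nilradicalE)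
  then have "r ^ m * b = 0" by (simp add: power_rb power_minus')
  with regular_elements_power[OF r] show "b = 0" by (rule regular_elementsD)
qed

lemma property_D_iff:
  "property_D TYPE('a::comm_ring_1) \<longleftrightarrow>
     (0::'a) \<noteq> 1 \<and> (\<forall>a::'a. a \<notin> nilradical \<longrightarrow> a \<in> regular_elements)"
proof
  assume "property_D TYPE('a)"
  then have D: "UNIV - nilradical = (regular_elements :: 'a set)"
    by (simp add: property_D_def)
  then have "(0::'a) \<notin> regular_elements" using zero_in_nilradical by blast
  then have "(0::'a) \<noteq> 1" using regular_elementsI[of "0::'a"] by auto
  with D show "(0::'a) \<noteq> 1 \<and> (\<forall>a::'a. a \<notin> nilradical \<longrightarrow> a \<in> regular_elements)"
    by blast
next
  assume "(0::'a) \<noteq> 1 \<and> (\<forall>a::'a. a \<notin> nilradical \<longrightarrow> a \<in> regular_elements)"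
  with nilradical_Int_regular_elements
  have "UNIV - nilradical = (regular_elements :: 'a set)" by blast
  then show "property_D TYPE('a)" by (simp add: property_D_def)
qed

lemma regular_elements_poly_if_coeff_0:
  fixes f :: "'a::comm_ring_1 poly"
  assumes "coeff f 0 \<in> regular_elements"
  shows "f \<in> regular_elements"
proof (rule regular_elementsI)
  fix g
  assume "f * g = 0"
  then show "g = 0"
  proof (induction g)
    case (pCons b q)
    have "coeff (f * pCons b q) 0 = 0"
      using pCons.prems by (simp del: mult_pCons_right)
    then have "coeff f 0 * b = 0" by (simp only: coeff_mult_0 coeff_pCons_0)
    with assms have "b = 0" by (rule regular_elementsD)
    with pCons show ?case by simp
  qed simp
qed

lemma const_poly_regular_elements_iff:
  "[:a::'a::comm_ring_1:] \<in> regular_elements \<longleftrightarrow> a \<in> regular_elements"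
proof
  assume a: "[:a:] \<in> regular_elements"
  show "a \<in> regular_elements"
  proof (rule regular_elementsI)
    fix b
    assume "a * b = 0"
    then have "[:a:] * [:b:] = 0" by (simp add: mult.commute)
    with a have "[:b:] = 0" by (rule regular_elementsD)
    then show "b = 0" by simp
  qed
qed (simp add: regular_elements_poly_if_coeff_0)

lemma const_poly_nilradical_iff:
  "[:a::'a::comm_ring_1:] \<in> nilradical \<longleftrightarrow> a \<in> nilradical"
  unfolding nilradical_def by (simp add: poly_const_pow)

lemma pCons_0_regular_elements:
  fixes p :: "'a::comm_ring_1 poly"
  assumes "p \<in> regular_elements"
  shows "pCons 0 p \<in> regular_elements"
proof (rule regular_elementsI)
  fix g
  assume "pCons 0 p * g = 0"
  then have "p * g = 0" by simp
  with assms show "g = 0" by (rule regular_elementsD)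
qed

lemma pCons_0_nilradical:
  fixes p :: "'a::comm_ring_1 poly"
  assumes "p \<in> nilradical"
  shows "pCons 0 p \<in> nilradical"
  using nilradical_mult[OF assms, of "[:0, 1:]"] by simp

lemma poly_regular_elements_if_not_nilradical:
  fixes f :: "'a::comm_ring_1 poly"
  assumes D: "\<forall>a::'a. a \<notin> nilradical \<longrightarrow> a \<in> regular_elements"
  shows "f \<notin> nilradical \<Longrightarrow> f \<in> regular_elements"
proof (induction f)
  case 0
  then show ?case using zero_in_nilradical by blast
next
  case (pCons a p)
  show ?case
  proof (cases "a \<in> nilradical")
    case False
    then have "coeff (pCons a p) 0 \<in> regular_elements" using D by simp
    then show ?thesis by (rule regular_elements_poly_if_coeff_0)
  next
    case True
    have split: "pCons a p = pCons 0 p + [:a:]" by simp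
    have a_nil: "[:a:] \<in> nilradical" using True by (simp add: const_poly_nilradical_iff)
    have "p \<notin> nilradical"
    proof
      assume "p \<in> nilradical"
      then have "pCons a p \<in> nilradical"
        unfolding split using a_nil by (intro nilradical_add pCons_0_nilradical)
      with pCons.prems show False by contradiction
    qed
    then have "pCons 0 p \<in> regular_elements" by (intro pCons_0_regular_elements pCons.IH)
    then show ?thesis unfolding split using a_nil by (rule regular_elements_add_nilradical)
  qed
qed

theorem mainTheorem14:
  shows "property_D TYPE('a::comm_ring_1) \<longleftrightarrow> property_D TYPE('a poly)"
proof -
  have nontrivial: "(0::'a poly) \<noteq> 1 \<longleftrightarrow> (0::'a) \<noteq> 1" by (simp add: one_pCons)
  have descend: "a \<in> regular_elements"
    if "\<forall>f::'a poly. f \<notin> nilradical \<longrightarrow> f \<in> regular_elements" "a \<notin> nilradical"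
    for a :: 'a
  proof -
    have "[:a:] \<notin> nilradical" using that(2) by (simp add: const_poly_nilradical_iff)
    then have "[:a:] \<in> regular_elements" using that(1) by blast
    then show ?thesis by (simp add: const_poly_regular_elements_iff)
  qed
  show ?thesis
    unfolding property_D_iff nontrivial
    using descend poly_regular_elements_if_not_nilradical by blast
qed

end
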